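(* Let $A$ be a densely defined closed operator in a complex Hilbert space $\mathcal{H}$ such that $\operatorname{Num}(A)$ has an interior point, $\operatorname{Num}(A)\neq\mathbb{C}$, and $\operatorname{D}(A)\subset\operatorname{D}(A^* )$. If $\lambda\in\partial\operatorname{Num}(A)$ is a point of unilateral infinite curvature of $\partial\overline{\operatorname{Num}}(A)$, then $\lambda\in\sigma(A)$.
   Context: $\operatorname{Num}(A)=\{\langle Af,f\rangle: f\in\operatorname{D}(A),\|f\|=1\}$ is the numerical range, $\overline{\operatorname{Num}}(A)$ its closure, $A^*$ the adjoint, $\sigma(A)$ the spectrum. Curvature conventions. Let $\Omega\subset\mathbb{C}$ be a closed convex set with nonempty interior and $\lambda\in\partial\Omega$. There is at least one supporting line of $\Omega$ through $\lambda$; $\lambda$ is called a corner point if there is more than one. If $\lambda$ is a corner point, $\Omega$ lies in a closed sector with vertex $\lambda$ and semivertical angle $<\pi/2$; take the smallest such sector and let $l_\lambda$ be the supporting line through $\lambda$ orthogonal to the axis of this sector; otherwise $l_\lambda$ is the unique supporting line. Use rectangular coordinates $(\xi,\eta)$ with origin at $\lambda$, $\xi$-axis equal to $l_\lambda$, oriented so that $\Omega\subset\{\eta\ge 0\}$. Let $D'_\varepsilon=\{(\xi,\eta):\xi^2+\eta^2\le\varepsilon^2,\ \xi\neq 0\}$. Define $\gamma_u^+(\lambda)=\lim_{\varepsilon\downarrow 0}\sup\{\eta/\xi^2:(\xi,\eta)\in\partial\Omega\cap D'_\varepsilon,\ \xi>0\}$ and $\gamma_l^+(\lambda)$ the same with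 $\inf$ in place of $\sup$; $\gamma_u^-(\lambda),\gamma_l^-(\lambda)$ are defined analogously with $\xi<0$. Set $\gamma_u(\lambda)=\max(\gamma_u^+(\lambda),\gamma_u^-(\lambda))$, $\gamma_l(\lambda)=\min(\gamma_l^+(\lambda),\gamma_l^-(\lambda))$. The point $\lambda$ is of infinite upper curvature if $\gamma_u(\lambda)=\infty$, and of unilateral infinite curvature if $\gamma_l^+(\lambda)=\infty$ or $\gamma_l^-(\lambda)=\infty$. For an operator $A$, these notions at $\lambda\in\partial\operatorname{Num}(A)$ refer to $\Omega=\overline{\operatorname{Num}}(A)$. *)

theory Defs
  imports "HOL-Analysis.Analysis"
begin

class complex_vector = real_vector +
  fixes scaleC :: "complex \<Rightarrow> 'a \<Rightarrow> 'a"
  assumes scaleC_add_right: "scaleC a (x + y) = scaleC a x + scaleC a y"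
    and scaleC_add_left: "scaleC (a + b) x = scaleC a x + scaleC b x"
    and scaleC_scaleC: "scaleC a (scaleC b x) = scaleC (a * b) x"
    and scaleC_one: "scaleC 1 x = x"
    and scaleR_scaleC: "scaleR r x = scaleC (complex_of_real r) x"

text \<open>Inner product: linear in the first argument, conjugate-linear in the second.\<close>
class complex_inner = complex_vector + real_normed_vector +
  fixes cinner :: "'a \<Rightarrow> 'a \<Rightarrow> complex"
  assumes cinner_commute: "cinner x y = cnj (cinner y x)"
    and cinner_add_left: "cinner (x + y) z = cinner x z + cinner y z"
    and cinner_scaleC_left: "cinner (scaleC c x) y = c * cinner x y"
    and cinner_self_nonneg: "0 \<le> Re (cinner x x)"
    and cinner_self_eq_zero: "cinner x x = 0 \<longleftrightarrow> x = 0"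
    and norm_eq_sqrt_cinner: "norm x = sqrt (Re (cinner x x))"

class chilbert_space = complex_inner + complete_space

section \<open>Unbounded operators: an operator is a domain D together with a map A\<close>

definition csubspace :: "'a::complex_vector set \<Rightarrow> bool" where
  "csubspace D \<longleftrightarrow> 0 \<in> D \<and> (\<forall>x\<in>D. \<forall>y\<in>D. x + y \<in> D) \<and> (\<forall>c. \<forall>x\<in>D. scaleC c x \<in> D)"

definition clinear_on :: "'a::complex_vector set \<Rightarrow> ('a \<Rightarrow> 'b::complex_vector) \<Rightarrow> bool" where
  "clinear_on D A \<longleftrightarrow> (\<forall>x\<in>D. \<forall>y\<in>D. A (x + y) = A x + A y) \<and>
                       (\<forall>c. \<forall>x\<in>D. A (scaleC c x) = scaleC c (A x))"

definition densely_defined :: "'a::complex_inner set \<Rightarrow> bool" where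
  "densely_defined D \<longleftrightarrow> closure D = UNIV"

definition closed_operator :: "'a::complex_inner set \<Rightarrow> ('a \<Rightarrow> 'a) \<Rightarrow> bool" where
  "closed_operator D A \<longleftrightarrow> closed {(x, A x) | x. x \<in> D}"

definition adj_dom :: "'a::complex_inner set \<Rightarrow> ('a \<Rightarrow> 'a) \<Rightarrow> 'a set" where
  "adj_dom D A = {y. \<exists>z. \<forall>x\<in>D. cinner (A x) y = cinner x z}"

definition Num :: "'a::complex_inner set \<Rightarrow> ('a \<Rightarrow> 'a) \<Rightarrow> complex set" where
  "Num D A = {cinner (A f) f | f. f \<in> D \<and> norm f = 1}"

definition op_resolvent :: "'a::complex_inner set \<Rightarrow> ('a \<Rightarrow> 'a) \<Rightarrow> complex set" where
  "op_resolvent D A = {l. bij_betw (\<lambda>x. A x - scaleC l x) D UNIV \<and>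
                          (\<exists>C. \<forall>x\<in>D. norm x \<le> C * norm (A x - scaleC l x))}"

definition op_spectrum :: "'a::complex_inner set \<Rightarrow> ('a \<Rightarrow> 'a) \<Rightarrow> complex set" where
  "op_spectrum D A = UNIV - op_resolvent D A"

text \<open>A supporting line through lam is described by its unit normal nu pointing into \<Omega>.\<close>
definition supporting_normal :: "complex set \<Rightarrow> complex \<Rightarrow> complex \<Rightarrow> bool" where
  "supporting_normal \<Omega> lam nu \<longleftrightarrow> cmod nu = 1 \<and> (\<forall>z\<in>\<Omega>. 0 \<le> Re (cnj nu * (z - lam)))"

definition corner_point :: "complex set \<Rightarrow> complex \<Rightarrow> bool" where
  "corner_point \<Omega> lam \<longleftrightarrow>
     (\<exists>nu1 nu2. supporting_normal \<Omega> lam nu1 \<and> supporting_normal \<Omega> lam nu2 \<and> nu1 \<noteq> nu2)"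

text \<open>Closed sector with vertex lam, unit axis direction d, semivertical angle alpha in [0, pi/2).\<close>
definition sector :: "complex \<Rightarrow> complex \<Rightarrow> real \<Rightarrow> complex set" where
  "sector lam d alpha = {z. cos alpha * cmod (z - lam) \<le> Re (cnj d * (z - lam))}"

text \<open>nu is the inward unit normal of the distinguished supporting line l_lam.\<close>
definition l_normal :: "complex set \<Rightarrow> complex \<Rightarrow> complex \<Rightarrow> bool" where
  "l_normal \<Omega> lam nu \<longleftrightarrow>
     (if corner_point \<Omega> lam then
        cmod nu = 1 \<and>
        (\<exists>alpha. 0 \<le> alpha \<and> alpha < pi/2 \<and> \<Omega> \<subseteq> sector lam nu alpha \<and>
           (\<forall>d beta. cmod d = 1 \<and> 0 \<le> beta \<and> beta < pi/2 \<and> \<Omega> \<subseteq> sector lam d beta \<longrightarrow> alpha \<le> beta))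
      else supporting_normal \<Omega> lam nu)"

text \<open>Rectangular coordinates with origin lam, xi-axis along l_lam, eta along the inward normal nu.\<close>
definition xi_coord :: "complex \<Rightarrow> complex \<Rightarrow> complex \<Rightarrow> real" where
  "xi_coord lam nu z = Re (\<i> * cnj nu * (z - lam))"

definition eta_coord :: "complex \<Rightarrow> complex \<Rightarrow> complex \<Rightarrow> real" where
  "eta_coord lam nu z = Re (cnj nu * (z - lam))"

definition gamma_l_plus :: "complex set \<Rightarrow> complex \<Rightarrow> complex \<Rightarrow> ereal" where
  "gamma_l_plus \<Omega> lam nu = Lim (at_right 0) (\<lambda>\<epsilon>::real.
     INF z \<in> {z \<in> frontier \<Omega>. cmod (z - lam) \<le> \<epsilon> \<and> xi_coord lam nu z > 0}.
       ereal (eta_coord lam nu z / (xi_coord lam nu z)\<^sup>2))"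

definition gamma_l_minus :: "complex set \<Rightarrow> complex \<Rightarrow> complex \<Rightarrow> ereal" where
  "gamma_l_minus \<Omega> lam nu = Lim (at_right 0) (\<lambda>\<epsilon>::real.
     INF z \<in> {z \<in> frontier \<Omega>. cmod (z - lam) \<le> \<epsilon> \<and> xi_coord lam nu z < 0}.
       ereal (eta_coord lam nu z / (xi_coord lam nu z)\<^sup>2))"

definition unilateral_infinite_curvature :: "complex set \<Rightarrow> complex \<Rightarrow> bool" where
  "unilateral_infinite_curvature \<Omega> lam \<longleftrightarrow>
     (\<exists>nu. l_normal \<Omega> lam nu \<and> (gamma_l_plus \<Omega> lam nu = \<infinity> \<or> gamma_l_minus \<Omega> lam nu = \<infinity>))"

end

theory Submission
  imports Defs
begin

text \<open>
  Suppose \<open>lam\<close> lies in the resolvent set and let \<open>nu\<close> be the inward unit normal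
  of the distinguished supporting line \<open>l_lam\<close>.  Since \<open>Num(A)\<close> lies in the half-plane
  bounded by \<open>l_lam\<close>, the rotated form \<open>q x = cnj nu * <(A - lam) x, x>\<close> is accretive on \<open>D\<close>.
  Take a unit vector \<open>f\<close> whose numerical value is within \<open>tau\<^sup>2\<close> of \<open>lam\<close> and solve
  \<open>(A - lam) h = -\<i> nu f\<close>; the bounded inverse gives \<open>norm h \<le> C\<close>.  Testing accretivity on
  \<open>f + z h\<close> for the four values \<open>z = \<plusminus>tau, \<plusminus>\<i> tau\<close> pins down the cross terms, and the
  Rayleigh quotient of \<open>f \<plusminus> tau h\<close> is then a point of \<open>Num(A)\<close> at distance \<open>O(tau)\<close> from
  \<open>lam\<close>, on a prescribed side of the normal, whose coordinates satisfy
  \<open>eta \<le> M xi\<^sup>2\<close> with \<open>M\<close> independent of \<open>tau\<close>.  Projecting it along the normal onto the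
  boundary of \<open>closure (Num A)\<close> keeps this inequality, so both one-sided lower curvatures
  are at most \<open>M\<close>, contradicting unilateral infinite curvature.

  The argument only
  uses linearity of \<open>A\<close> on the subspace \<open>D\<close> and the definition of the resolvent set.
\<close>

lemma cinner_add_right: "cinner (x::'a::complex_inner) (y + z) = cinner x y + cinner x z"
  by (metis cinner_add_left cinner_commute complex_cnj_add)

lemma cinner_scaleC_right: "cinner (x::'a::complex_inner) (scaleC c y) = cnj c * cinner x y"
  by (metis cinner_commute cinner_scaleC_left complex_cnj_mult)

lemma scaleC_minus1: "scaleC (-1) (x::'a::complex_vector) = - x"
  using scaleR_scaleC[of "-1" x] by simp

lemma scaleC_diff_right: "scaleC c ((x::'a::complex_vector) - y) = scaleC c x - scaleC c y"
proof -
  have "scaleC c (- y) = - scaleC c y" by (metis mult.commute scaleC_minus1 scaleC_scaleC)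
  then show ?thesis by (metis diff_conv_add_uminus scaleC_add_right)
qed

lemma cinner_diff_left: "cinner ((x::'a::complex_inner) - y) z = cinner x z - cinner y z"
proof -
  have "cinner (- y) z = - cinner y z" by (metis cinner_scaleC_left mult_minus1 scaleC_minus1)
  then show ?thesis by (metis cinner_add_left diff_conv_add_uminus)
qed

lemma cinner_zero_right: "cinner (x::'a::complex_inner) 0 = 0"
  using cinner_scaleC_right[of x 0 0] scaleR_scaleC[of 0 "0::'a"] by simp

lemma cinner_self: "cinner (x::'a::complex_inner) x = complex_of_real ((norm x)^2)"
proof -
  have "Im (cinner x x) = Im (cnj (cinner x x))" using cinner_commute[of x x] by metis
  then have "Im (cinner x x) = 0" by simp
  moreover have "Re (cinner x x) = (norm x)^2"
    using norm_eq_sqrt_cinner[of x] cinner_self_nonneg[of x] by simp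
  ultimately show ?thesis by (simp add: complex_eq_iff)
qed

lemma norm_scaleC: "norm (scaleC c (x::'a::complex_inner)) = cmod c * norm x"
proof -
  have "complex_of_real ((norm (scaleC c x))^2) = (c * cnj c) * complex_of_real ((norm x)^2)"
    by (simp only: cinner_self[symmetric] cinner_scaleC_left cinner_scaleC_right mult.assoc mult.left_commute)
  also have "\<dots> = complex_of_real ((cmod c * norm x)^2)"
    by (simp add: complex_norm_square[symmetric] power_mult_distrib)
  finally have "(norm (scaleC c x))^2 = (cmod c * norm x)^2" by (simp only: of_real_eq_iff)
  then show ?thesis by simp
qed

text \<open>A crude substitute for Cauchy--Schwarz, obtained from the polarisation identity.\<close>
lemma re_cinner_bound: "\<bar>Re (cinner (x::'a::complex_inner) y)\<bar> \<le> (norm x + norm y)^2"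
proof -
  have "(norm (x+y))^2 = Re (cinner (x+y) (x+y))" using cinner_self[of "x+y"] by simp
  also have "\<dots> = Re (cinner x x) + Re (cinner y y) + Re (cinner x y) + Re (cinner y x)"
    by (simp add: cinner_add_left cinner_add_right)
  finally have e: "(norm (x+y))^2 = (norm x)^2 + (norm y)^2 + 2 * Re (cinner x y)"
    using cinner_self[of x] cinner_self[of y] cinner_commute[of y x] by simp
  have "(norm (x+y))^2 \<le> (norm x + norm y)^2"
    using norm_triangle_ineq[of x y] by (simp add: power_mono)
  then show ?thesis using e
    by (smt (verit, best) norm_ge_zero power2_sum zero_le_mult_iff zero_le_power2)
qed

lemma cinner_bound: "cmod (cinner (x::'a::complex_inner) y) \<le> 2 * (norm x + norm y)^2"
proof -
  have "Re (cinner x (scaleC \<i> y)) = Im (cinner x y)" by (simp add: cinner_scaleC_right)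
  then have "\<bar>Im (cinner x y)\<bar> \<le> (norm x + norm y)^2"
    using re_cinner_bound[of x "scaleC \<i> y"] by (simp add: norm_scaleC)
  then show ?thesis using re_cinner_bound[of x y] cmod_le[of "cinner x y"] by linarith
qed

lemma unit_cnj_mult: "cmod nu = 1 \<Longrightarrow> cnj nu * nu = 1"
  using complex_norm_square[of nu] by (simp add: mult.commute)

lemma cmod_rotate: "cmod nu = 1 \<Longrightarrow> cmod (cnj nu * w) = cmod w"
  by (simp add: norm_mult)

lemma shifted_op_line:
  assumes "csubspace D" "clinear_on D A" "f \<in> D" "h \<in> D"
  shows "A (f + scaleC z h) - scaleC lam (f + scaleC z h)
       = (A f - scaleC lam f) + scaleC z (A h - scaleC lam h)"
proof -
  have "scaleC z h \<in> D" using assms(1,4) unfolding csubspace_def by blast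
  then have "A (f + scaleC z h) = A f + scaleC z (A h)"
    using assms unfolding clinear_on_def by metis
  moreover have "scaleC lam (scaleC z h) = scaleC z (scaleC lam h)"
    by (simp add: scaleC_scaleC mult.commute)
  ultimately show ?thesis
    by (simp add: scaleC_add_right scaleC_diff_right algebra_simps)
qed

lemma shifted_form_line:
  assumes "csubspace D" "clinear_on D A" "f \<in> D" "h \<in> D"
  shows "cinner (A (f + scaleC z h) - scaleC lam (f + scaleC z h)) (f + scaleC z h)
       = cinner (A f - scaleC lam f) f + cnj z * cinner (A f - scaleC lam f) h
         + z * cinner (A h - scaleC lam h) f + z * cnj z * cinner (A h - scaleC lam h) h"
  unfolding shifted_op_line[OF assms]
  by (simp only: cinner_add_left cinner_add_right cinner_scaleC_left cinner_scaleC_right,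
      simp add: algebra_simps)

lemma rayleigh_point:
  assumes "csubspace D" "clinear_on D A" "g \<in> D" "g \<noteq> 0"
  shows "\<exists>z\<in>Num D A. z - lam = cinner (A g - scaleC lam g) g / complex_of_real ((norm g)^2)"
proof -
  define c where "c = complex_of_real (1 / norm g)"
  define g' where "g' = scaleC c g"
  have g'D: "g' \<in> D" using assms unfolding csubspace_def g'_def by blast
  have n1: "norm g' = 1" unfolding g'_def c_def norm_scaleC using assms(4) by (simp add: norm_divide)
  have "A g' = scaleC c (A g)" using assms unfolding clinear_on_def g'_def by blast
  then have "A g' - scaleC lam g' = scaleC c (A g - scaleC lam g)"
    unfolding g'_def by (simp add: scaleC_diff_right scaleC_scaleC mult.commute)
  then have "cinner (A g' - scaleC lam g') g' = c * cnj c * cinner (A g - scaleC lam g) g"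
    unfolding g'_def by (simp add: cinner_scaleC_left cinner_scaleC_right)
  also have "\<dots> = cinner (A g - scaleC lam g) g / complex_of_real ((norm g)^2)"
    unfolding c_def by (simp add: power2_eq_square divide_simps)
  also have "cinner (A g' - scaleC lam g') g' = cinner (A g') g' - lam"
    using n1 by (simp add: cinner_diff_left cinner_scaleC_left cinner_self)
  finally show ?thesis using g'D n1 unfolding Num_def by blast
qed

section \<open>Geometry of the distinguished supporting line\<close>

text \<open>The normal of \<open>l_lam\<close> is a genuine supporting normal, also at a corner point, where it
  is the axis of a sector of semivertical angle below \<open>pi/2\<close> containing \<open>\<Omega>\<close>.\<close>
lemma l_normal_supporting:
  assumes "l_normal \<Omega> lam nu"
  shows "supporting_normal \<Omega> lam nu"
proof (cases "corner_point \<Omega> lam")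
  case True
  then obtain alpha where al: "cmod nu = 1" "0 \<le> alpha" "alpha < pi/2" "\<Omega> \<subseteq> sector lam nu alpha"
    using assms unfolding l_normal_def by auto
  have "0 \<le> cos alpha" using al by (intro cos_ge_zero) auto
  then have "0 \<le> Re (cnj nu * (z - lam))" if "z \<in> \<Omega>" for z
    using al(4) that unfolding sector_def
    by (smt (verit, ccfv_SIG) mem_Collect_eq norm_ge_zero subsetD zero_le_mult_iff)
  then show ?thesis using al(1) unfolding supporting_normal_def by blast
next
  case False
  then show ?thesis using assms unfolding l_normal_def by auto
qed

lemma coords:
  "eta_coord lam nu p = Re (cnj nu * (p - lam))" "xi_coord lam nu p = - Im (cnj nu * (p - lam))"
  unfolding eta_coord_def xi_coord_def by (simp_all add: mult.assoc)

lemma frontier_projection: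
  assumes cl: "closed \<Omega>" and nu: "cmod nu = 1" and pos: "\<And>p. p \<in> \<Omega> \<Longrightarrow> 0 \<le> eta_coord lam nu p"
    and z: "z \<in> \<Omega>"
  shows "\<exists>q\<in>frontier \<Omega>. xi_coord lam nu q = xi_coord lam nu z \<and>
           eta_coord lam nu q \<le> eta_coord lam nu z \<and> cmod (q - lam) \<le> cmod (z - lam)"
proof -
  define e where "e = eta_coord lam nu z"
  have e0: "0 \<le> e" using pos[OF z] e_def by simp
  have shift: "cnj nu * (z - nu * complex_of_real r - lam) = cnj nu * (z - lam) - complex_of_real r" for r
  proof -
    have "cnj nu * (z - nu * complex_of_real r - lam) = cnj nu * (z - lam) - (cnj nu * nu) * complex_of_real r"
      by (simp add: algebra_simps)
    then show ?thesis unfolding unit_cnj_mult[OF nu] by simp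
  qed
  define z' where "z' = z - nu * complex_of_real (e + 1)"
  have "eta_coord lam nu z' = -1" unfolding z'_def coords shift using e_def coords by simp
  then have "z' \<notin> \<Omega>" using pos by force
  then obtain q where q: "q \<in> closed_segment z z'" "q \<in> frontier \<Omega>"
    using connected_Int_frontier[of "closed_segment z z'" \<Omega>] z by blast
  then obtain u where u: "0 \<le> u" "u \<le> 1" "q = (1 - u) *\<^sub>R z + u *\<^sub>R z'"
    unfolding closed_segment_def by blast
  have qe: "q = z - nu * complex_of_real (u * (e + 1))"
    unfolding u(3) z'_def by (simp add: scaleR_conv_of_real algebra_simps)
  have X: "cnj nu * (q - lam) = cnj nu * (z - lam) - complex_of_real (u * (e + 1))"
    unfolding qe shift ..
  have xq: "xi_coord lam nu q = xi_coord lam nu z" unfolding coords X by simp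
  have eq0: "0 \<le> eta_coord lam nu q" using pos q(2) cl frontier_subset_closed by blast
  have "0 \<le> u * (e + 1)" using u e0 by simp
  then have eqz: "eta_coord lam nu q \<le> e" unfolding coords X by (simp add: e_def coords)
  have "cmod (q - lam) = sqrt ((eta_coord lam nu q)^2 + (xi_coord lam nu q)^2)"
    using cmod_rotate[OF nu] by (simp only: coords power2_minus cmod_def)
  also have "\<dots> \<le> sqrt (e^2 + (xi_coord lam nu z)^2)"
    using power_mono[OF eqz eq0] xq by simp
  also have "\<dots> = cmod (z - lam)"
    using cmod_rotate[OF nu] by (simp only: e_def coords power2_minus cmod_def)
  finally show ?thesis using q(2) xq eqz e_def by blast
qed

text \<open>A one-sided lower curvature is finite as soon as arbitrarily close to \<open>lam\<close> there are
  boundary points (on the relevant side) with \<open>eta / xi\<^sup>2 \<le> M\<close>: the infima increase as the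
  radius shrinks, so their limit is their supremum, which is at most \<open>M\<close>.\<close>
lemma curvature_limit_finite:
  assumes H: "\<And>\<epsilon>. \<epsilon> > 0 \<Longrightarrow> \<exists>z\<in>frontier \<Omega>. cmod (z - lam) \<le> \<epsilon> \<and> P (xi_coord lam nu z) \<and>
                  eta_coord lam nu z / (xi_coord lam nu z)^2 \<le> M"
  shows "Lim (at_right 0) (\<lambda>\<epsilon>::real. INF z \<in> {z \<in> frontier \<Omega>. cmod (z - lam) \<le> \<epsilon> \<and> P (xi_coord lam nu z)}.
           ereal (eta_coord lam nu z / (xi_coord lam nu z)\<^sup>2)) \<noteq> \<infinity>"
proof -
  define G where "G = (\<lambda>\<epsilon>::real. INF z \<in> {z \<in> frontier \<Omega>. cmod (z - lam) \<le> \<epsilon> \<and> P (xi_coord lam nu z)}.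
           ereal (eta_coord lam nu z / (xi_coord lam nu z)\<^sup>2))"
  have mono: "G e2 \<le> G e1" if "e1 \<le> e2" for e1 e2
    unfolding G_def by (rule INF_superset_mono) (use that in auto)
  have bd: "G e \<le> ereal M" if e0: "e > 0" for e
  proof -
    obtain z where z: "z\<in>frontier \<Omega>" "cmod (z - lam) \<le> e" "P (xi_coord lam nu z)"
      "eta_coord lam nu z / (xi_coord lam nu z)^2 \<le> M" using H[OF e0] by blast
    show ?thesis unfolding G_def by (rule INF_lower2[of z]) (use z in auto)
  qed
  define S where "S = (SUP e\<in>{0<..}. G e)"
  have SM: "S \<le> ereal M" unfolding S_def using bd by (auto intro: SUP_least)
  have "(G \<longlongrightarrow> S) (at_right 0)"
  proof (rule order_tendstoI)
    fix y assume "y < S"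
    then obtain e0 where e0: "e0 > 0" "y < G e0" unfolding S_def less_SUP_iff by auto
    show "eventually (\<lambda>e. y < G e) (at_right 0)"
      unfolding eventually_at_right[OF e0(1)]
      using e0 mono by (intro exI[of _ e0]) (auto intro: less_le_trans)
  next
    fix y assume "S < y"
    have "G e < y" if "0 < e" for e
      using SUP_upper[of e "{0<..}" G] that \<open>S < y\<close> unfolding S_def by auto
    then show "eventually (\<lambda>e. G e < y) (at_right 0)"
      by (rule eventually_mono[OF eventually_at_right_less])
  qed
  then have "Lim (at_right 0) G = S" by (intro tendsto_Lim) simp_all
  then show ?thesis using SM unfolding G_def by auto
qed

section \<open>Accretivity of the rotated form and the resolvent\<close>

lemma rotated_form_accretive:
  assumes D: "csubspace D" "clinear_on D A"
    and sup: "supporting_normal (closure (Num D A)) lam nu" and x: "x \<in> D"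
  shows "0 \<le> Re (cnj nu * cinner (A x - scaleC lam x) x)"
proof (cases "x = 0")
  case True
  then show ?thesis by (simp add: cinner_zero_right)
next
  case False
  then obtain z where z: "z \<in> Num D A"
    and zq: "z - lam = cinner (A x - scaleC lam x) x / complex_of_real ((norm x)^2)"
    using rayleigh_point[OF D x] by blast
  have "0 \<le> Re (cnj nu * (z - lam))"
    using sup z closure_subset unfolding supporting_normal_def by blast
  then have "0 \<le> Re (cnj nu * cinner (A x - scaleC lam x) x) / (norm x)^2"
    unfolding zq by simp
  then show ?thesis using False by (simp add: zero_le_divide_iff)
qed

lemma resolvent_bounded_solution:
  assumes "lam \<in> op_resolvent D A"
  obtains C where "0 \<le> C" "\<And>y. \<exists>h\<in>D. A h - scaleC lam h = y \<and> norm h \<le> C * norm y"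
proof -
  obtain C where C: "\<And>x. x \<in> D \<Longrightarrow> norm x \<le> C * norm (A x - scaleC lam x)"
    and onto: "(\<lambda>x. A x - scaleC lam x) ` D = UNIV"
    using assms unfolding op_resolvent_def bij_betw_def by blast
  have "\<exists>h\<in>D. A h - scaleC lam h = y \<and> norm h \<le> \<bar>C\<bar> * norm y" for y
  proof -
    have "y \<in> (\<lambda>x. A x - scaleC lam x) ` D" using onto by simp
    then obtain h where h: "h \<in> D" "A h - scaleC lam h = y" by blast
    have "norm h \<le> C * norm y" using C[OF h(1)] h(2) by simp
    also have "\<dots> \<le> \<bar>C\<bar> * norm y" by (simp add: mult_right_mono)
    finally show ?thesis using h by blast
  qed
  then show ?thesis by (rule that[OF abs_ge_zero])
qed

text \<open>Let \<open>f\<close> be a unit vector and \<open>(A - lam) h = -\<i> nu f\<close>.  Along the line \<open>f + z h\<close> the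
  rotated form is \<open>w + cnj z a - \<i> z + |z|\<^sup>2 b\<close>, with the linear term \<open>-\<i> z\<close> forced by the
  choice of \<open>h\<close>.\<close>
lemma test_line_form:
  assumes D: "csubspace D" "clinear_on D A" and nu: "cmod nu = 1"
    and f: "f \<in> D" "norm f = 1" and h: "h \<in> D" "A h - scaleC lam h = scaleC (- \<i> * nu) f"
  shows "cnj nu * cinner (A (f + scaleC z h) - scaleC lam (f + scaleC z h)) (f + scaleC z h)
       = cnj nu * cinner (A f - scaleC lam f) f + cnj z * (cnj nu * cinner (A f - scaleC lam f) h)
         - \<i> * z + z * cnj z * (- \<i> * cinner f h)"
proof -
  have ff: "cinner f f = 1" using cinner_self[of f] f(2) by simp
  have "cnj nu * cinner (A (f + scaleC z h) - scaleC lam (f + scaleC z h)) (f + scaleC z h)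
     = cnj nu * (cinner (A f - scaleC lam f) f + cnj z * cinner (A f - scaleC lam f) h
         + z * ((- \<i> * nu) * 1) + z * cnj z * ((- \<i> * nu) * cinner f h))"
    unfolding shifted_form_line[OF D f(1) h(1)] h(2) by (simp add: cinner_scaleC_left ff)
  also have "\<dots> = cnj nu * cinner (A f - scaleC lam f) f
      + cnj z * (cnj nu * cinner (A f - scaleC lam f) h)
      + z * (- \<i>) * (cnj nu * nu) + z * cnj z * (- \<i>) * (cnj nu * nu) * cinner f h"
    by (simp add: algebra_simps)
  finally show ?thesis unfolding unit_cnj_mult[OF nu] by (simp add: algebra_simps)
qed

text \<open>If \<open>w + cnj z a - \<i> z + |z|\<^sup>2 b\<close> has nonnegative real part for all \<open>z\<close>,
  with \<open>|w| \<le> tau\<^sup>2\<close> and \<open>|b| \<le> K\<close>, then testing \<open>z = \<plusminus>tau, \<plusminus>\<i> tau\<close> shows that at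
  \<open>z = \<sigma> tau\<close> the value \<open>Q\<close> has imaginary part of size about \<open>tau\<close> with sign \<open>-\<sigma>\<close>, while
  its real part is only \<open>O(tau\<^sup>2)\<close>.\<close>
lemma accretive_quadratic_estimates:
  fixes w a b :: complex and \<tau> K \<sigma> :: real
  assumes acc: "\<And>z. 0 \<le> Re (w + cnj z * a - \<i> * z + z * cnj z * b)"
    and w: "cmod w \<le> \<tau>^2" and b: "cmod b \<le> K" and tau: "0 < \<tau>" "\<tau> * (2 + 2*K) \<le> 1"
    and s: "\<sigma> = 1 \<or> \<sigma> = -1"
  defines "Q \<equiv> w + complex_of_real (\<sigma>*\<tau>) * a - \<i> * complex_of_real (\<sigma>*\<tau>) + complex_of_real (\<tau>^2) * b"
  shows "\<tau> \<le> \<sigma> * (- Im Q)" "\<bar>Im Q\<bar> \<le> 3*\<tau>" "0 \<le> Re Q" "Re Q \<le> 2*\<tau>^2*(1+K)" "cmod Q \<le> 4*\<tau>"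
proof -
  have i1: "0 \<le> Re w + \<tau> * Re a + \<tau>^2 * Re b"
    using acc[of "complex_of_real \<tau>"] by (simp add: power2_eq_square)
  have i2: "0 \<le> Re w - \<tau> * Re a + \<tau>^2 * Re b"
    using acc[of "complex_of_real (-\<tau>)"] by (simp add: power2_eq_square)
  have i3: "0 \<le> Re w + \<tau> * Im a + \<tau> + \<tau>^2 * Re b"
    using acc[of "\<i> * complex_of_real \<tau>"] by (simp add: power2_eq_square)
  have i4: "0 \<le> Re w - \<tau> * Im a - \<tau> + \<tau>^2 * Re b"
    using acc[of "\<i> * complex_of_real (-\<tau>)"] by (simp add: power2_eq_square)
  have wb: "\<bar>Re w\<bar> \<le> \<tau>^2" "\<bar>Im w\<bar> \<le> \<tau>^2" "\<bar>Re b\<bar> \<le> K" "\<bar>Im b\<bar> \<le> K"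
    using w b abs_Re_le_cmod[of w] abs_Im_le_cmod[of w] abs_Re_le_cmod[of b] abs_Im_le_cmod[of b]
    by linarith+
  have t2: "0 \<le> \<tau>^2" by simp
  have p1: "\<tau>^2 * Re b \<le> \<tau>^2 * K" "\<bar>\<tau>^2 * Im b\<bar> \<le> \<tau>^2 * K"
    using mult_left_mono[OF _ t2] wb(3,4) by (auto simp: abs_mult)
  have p2: "2*\<tau>^2 + 2*(\<tau>^2*K) \<le> \<tau>"
    using mult_left_mono[OF tau(2), of \<tau>] tau(1) by (simp add: power2_eq_square algebra_simps)
  have ReQ: "Re Q = Re w + \<sigma> * \<tau> * Re a + \<tau>^2 * Re b"
    and ImQ: "Im Q = Im w + \<sigma> * \<tau> * Im a - \<sigma> * \<tau> + \<tau>^2 * Im b"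
    unfolding Q_def by simp_all
  show R0: "0 \<le> Re Q" using s i1 i2 unfolding ReQ by auto
  have key: "\<tau> \<le> \<sigma> * (- Im Q) \<and> \<bar>Im Q\<bar> \<le> 3 * \<tau> \<and> Re Q \<le> 2*\<tau>^2 + 2*(\<tau>^2*K)"
    using s
  proof
    assume s1: "\<sigma> = 1"
    have "Re Q = Re w + \<tau> * Re a + \<tau>^2 * Re b" "Im Q = Im w + \<tau> * Im a - \<tau> + \<tau>^2 * Im b"
      using ReQ ImQ s1 by simp_all
    then show ?thesis using wb p1 p2 i1 i2 i3 i4 unfolding abs_le_iff s1 by (intro conjI; linarith)
  next
    assume s1: "\<sigma> = -1"
    have "Re Q = Re w - \<tau> * Re a + \<tau>^2 * Re b" "Im Q = Im w - \<tau> * Im a + \<tau> + \<tau>^2 * Im b"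
      using ReQ ImQ s1 by simp_all
    then show ?thesis using wb p1 p2 i1 i2 i3 i4 unfolding abs_le_iff s1 by (intro conjI; linarith)
  qed
  then show "\<tau> \<le> \<sigma> * (- Im Q)" "\<bar>Im Q\<bar> \<le> 3*\<tau>" "Re Q \<le> 2*\<tau>^2*(1+K)"
    by (simp_all add: algebra_simps)
  show "cmod Q \<le> 4*\<tau>" using key R0 p2 cmod_le[of Q] by linarith
qed

lemma ratio_bound:
  fixes R I N \<tau> K :: real
  assumes "0 < \<tau>" "\<tau> \<le> \<bar>I\<bar>" "0 \<le> R" "R \<le> 2*\<tau>^2*(1+K)" "0 < N" "N \<le> 9/4" "0 \<le> K"
  shows "R / N \<le> 5*(1+K) * (I / N)^2"
proof -
  have "R * N \<le> 2*\<tau>^2*(1+K) * (9/4)" using assms by (intro mult_mono) auto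
  also have "\<dots> \<le> 5*(1+K) * \<tau>^2" using assms by (simp add: algebra_simps)
  also have "\<dots> \<le> 5*(1+K) * I^2"
    using assms power_mono[of \<tau> "\<bar>I\<bar>" 2] by (intro mult_left_mono) auto
  finally have "R * N \<le> 5*(1+K) * I^2" .
  then show ?thesis using assms(5) by (simp add: field_simps power2_eq_square)
qed

lemma rayleigh_point_coords:
  fixes lam :: complex
  assumes D: "csubspace D" "clinear_on D A" and g: "g \<in> D" "g \<noteq> 0" and nu: "cmod nu = 1"
  defines "Q \<equiv> cnj nu * cinner (A g - scaleC lam g) g"
  shows "\<exists>z\<in>Num D A. xi_coord lam nu z = - Im Q / (norm g)^2 \<and>
           eta_coord lam nu z = Re Q / (norm g)^2 \<and> cmod (z - lam) = cmod Q / (norm g)^2"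
proof -
  obtain z where z: "z \<in> Num D A"
    and zq: "z - lam = cinner (A g - scaleC lam g) g / complex_of_real ((norm g)^2)"
    using rayleigh_point[OF D g] by blast
  have rot: "cnj nu * (z - lam) = Q / complex_of_real ((norm g)^2)" unfolding zq Q_def by simp
  have "cmod (z - lam) = cmod Q / (norm g)^2"
    using cmod_rotate[OF nu, of "z - lam"] unfolding rot by (simp add: norm_divide norm_power)
  moreover have "xi_coord lam nu z = - Im Q / (norm g)^2" "eta_coord lam nu z = Re Q / (norm g)^2"
    unfolding coords rot by simp_all
  ultimately show ?thesis using z by blast
qed

lemma perturbed_unit_norm:
  assumes "norm f = 1" "norm v \<le> 1/2"
  shows "1/4 \<le> (norm (f + v))^2" "(norm (f + v))^2 \<le> 9/4"
proof -
  have "norm f - norm v \<le> norm (f + v)" by (metis norm_diff_ineq)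
  then have "1/2 \<le> norm (f + v)" using assms by simp
  then have "(1/2)^2 \<le> (norm (f + v))^2" by (intro power_mono) auto
  then show "1/4 \<le> (norm (f + v))^2" by (simp add: power2_eq_square)
  have "norm (f + v) \<le> 3/2" using norm_triangle_ineq[of f v] assms by simp
  then have "(norm (f + v))^2 \<le> (3/2)^2" by (intro power_mono) auto
  then show "(norm (f + v))^2 \<le> 9/4" by (simp add: power2_eq_square)
qed

lemma near_point_on_side:
  fixes D :: "'a::complex_inner set" and A :: "'a \<Rightarrow> 'a" and f h :: 'a and \<tau> K \<sigma> :: real
  assumes D: "csubspace D" "clinear_on D A" and nu: "cmod nu = 1"
    and acc: "\<And>x. x \<in> D \<Longrightarrow> 0 \<le> Re (cnj nu * cinner (A x - scaleC lam x) x)"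
    and f: "f \<in> D" "norm f = 1" and h: "h \<in> D" "A h - scaleC lam h = scaleC (- \<i> * nu) f"
    and hK: "norm h \<le> K" and fhK: "cmod (cinner f h) \<le> K"
    and w: "cmod (cinner (A f - scaleC lam f) f) \<le> \<tau>^2"
    and tau: "0 < \<tau>" "\<tau> * (2 + 2*K) \<le> 1" and s: "\<sigma> = 1 \<or> \<sigma> = -1"
  shows "\<exists>z\<in>Num D A. cmod (z - lam) \<le> 16*\<tau> \<and> \<sigma> * xi_coord lam nu z > 0 \<and>
           eta_coord lam nu z \<le> 5*(1+K) * (xi_coord lam nu z)^2"
proof -
  define w where "w = cnj nu * cinner (A f - scaleC lam f) f"
  define a where "a = cnj nu * cinner (A f - scaleC lam f) h"
  define b where "b = - \<i> * cinner f h"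
  define t where "t = \<sigma> * \<tau>"
  define Q where "Q = w + complex_of_real t * a - \<i> * complex_of_real t + complex_of_real (\<tau>^2) * b"
  define g where "g = f + scaleC (complex_of_real t) h"
  have form: "cnj nu * cinner (A (f + scaleC z h) - scaleC lam (f + scaleC z h)) (f + scaleC z h)
      = w + cnj z * a - \<i> * z + z * cnj z * b" for z
    unfolding w_def a_def b_def by (rule test_line_form[OF D nu f h])
  have acc_line: "0 \<le> Re (w + cnj z * a - \<i> * z + z * cnj z * b)" for z
    using acc[of "f + scaleC z h"] D(1) f(1) h(1) unfolding form csubspace_def by blast
  have "cmod w \<le> \<tau>^2" "cmod b \<le> K" using w fhK unfolding w_def b_def by (simp_all add: norm_mult nu)
  note est = accretive_quadratic_estimates[OF acc_line this tau s, folded t_def, folded Q_def]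
  have t2: "\<bar>t\<bar> = \<tau>" "t * t = \<tau>^2" using s tau unfolding t_def by (auto simp: power2_eq_square)
  have "\<tau> * K \<le> 1/2" using tau by (simp add: algebra_simps)
  moreover have "norm (scaleC (complex_of_real t) h) \<le> \<tau> * K"
    using hK tau t2 by (simp add: norm_scaleC mult_left_mono)
  ultimately have n2: "1/4 \<le> (norm g)^2" "(norm g)^2 \<le> 9/4"
    using perturbed_unit_norm[OF f(2)] unfolding g_def by (meson order_trans)+
  have g0: "g \<noteq> 0" using n2(1) by auto
  have gD: "g \<in> D" unfolding g_def using D(1) f(1) h(1) unfolding csubspace_def by blast
  have "complex_of_real t * complex_of_real t = (complex_of_real \<tau>)^2"
    using t2(2) by (metis of_real_mult of_real_power)
  then have "cnj nu * cinner (A g - scaleC lam g) g = Q" unfolding g_def form Q_def by simp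
  then obtain z where z: "z \<in> Num D A" "xi_coord lam nu z = - Im Q / (norm g)^2"
      "eta_coord lam nu z = Re Q / (norm g)^2" "cmod (z - lam) = cmod Q / (norm g)^2"
    using rayleigh_point_coords[OF D gD g0 nu, of lam] by force
  have "\<tau> \<le> \<bar>- Im Q\<bar>" using est(1) s by auto
  then have "eta_coord lam nu z \<le> 5*(1+K) * (xi_coord lam nu z)^2"
    unfolding z using ratio_bound[where R="Re Q" and I="- Im Q" and N="(norm g)^2" and \<tau>=\<tau> and K=K] est n2 tau g0 order_trans[OF norm_ge_zero hK]
    by auto
  moreover have "\<sigma> * xi_coord lam nu z > 0"
    using est(1) tau g0 unfolding z by (simp add: divide_neg_pos)
  moreover have "cmod (z - lam) \<le> 16*\<tau>"
  proof -
    have "4*\<tau> \<le> 16*\<tau> * (norm g)^2" using mult_left_mono[OF n2(1), of "16*\<tau>"] tau by simp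
    then show ?thesis using est(5) g0 unfolding z by (simp add: divide_simps)
  qed
  ultimately show ?thesis using z(1) by blast
qed

section \<open>Points of small curvature ratio near a resolvent point\<close>

lemma approximating_unit_vector:
  assumes "lam \<in> closure (Num D A)" "0 < \<delta>"
  obtains f where "f \<in> D" "norm f = 1" "cmod (cinner (A f - scaleC lam f) f) < \<delta>"
proof -
  obtain z where "z \<in> Num D A" "dist z lam < \<delta>"
    using assms closure_approachable[of lam "Num D A"] by blast
  then obtain f where f: "f \<in> D" "norm f = 1" "cmod (cinner (A f) f - lam) < \<delta>"
    unfolding Num_def by (auto simp: dist_norm)
  have "cinner (A f - scaleC lam f) f = cinner (A f) f - lam"
    using cinner_self[of f] f(2) by (simp add: cinner_diff_left cinner_scaleC_left)
  then show ?thesis using that f by simp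
qed

lemma resolvent_near_points:
  fixes D :: "'a::complex_inner set" and A :: "'a \<Rightarrow> 'a"
  assumes D: "csubspace D" "clinear_on D A" and res: "lam \<in> op_resolvent D A"
    and lamN: "lam \<in> closure (Num D A)" and sup: "supporting_normal (closure (Num D A)) lam nu"
  obtains M where "\<And>\<epsilon> \<sigma>. \<epsilon> > 0 \<Longrightarrow> \<sigma> = 1 \<or> \<sigma> = -1 \<Longrightarrow> \<exists>z\<in>Num D A. cmod (z - lam) \<le> \<epsilon> \<and>
      \<sigma> * xi_coord lam nu z > 0 \<and> eta_coord lam nu z \<le> M * (xi_coord lam nu z)^2"
proof -
  obtain C where C0: "0 \<le> C" and C: "\<And>y. \<exists>h\<in>D. A h - scaleC lam h = y \<and> norm h \<le> C * norm y"
    using resolvent_bounded_solution[OF res] by blast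
  have nu: "cmod nu = 1" using sup unfolding supporting_normal_def by blast
  define K where "K = 2 * (1 + C)^2"
  have "C \<le> (1 + C)^2" using C0 by (simp add: power2_eq_square algebra_simps)
  then have CK: "C \<le> K" unfolding K_def using C0 by linarith
  have "\<exists>z\<in>Num D A. cmod (z - lam) \<le> \<epsilon> \<and> \<sigma> * xi_coord lam nu z > 0 \<and>
      eta_coord lam nu z \<le> 5*(1+K) * (xi_coord lam nu z)^2"
    if e: "\<epsilon> > 0" and s: "\<sigma> = 1 \<or> \<sigma> = -1" for \<epsilon> \<sigma>
  proof -
    define \<tau> where "\<tau> = min (\<epsilon>/16) (1 / (2 + 2*K))"
    have tau: "0 < \<tau>" "\<tau> * (2 + 2*K) \<le> 1" "16 * \<tau> \<le> \<epsilon>"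
      unfolding \<tau>_def using e C0 CK by (auto simp: min_def field_simps)
    obtain f where f: "f \<in> D" "norm f = 1" "cmod (cinner (A f - scaleC lam f) f) < \<tau>^2"
      using approximating_unit_vector[OF lamN] tau(1) by (metis zero_less_power)
    obtain h where h: "h \<in> D" "A h - scaleC lam h = scaleC (- \<i> * nu) f" and hC: "norm h \<le> C"
      using C[of "scaleC (- \<i> * nu) f"] f(2) nu by (auto simp: norm_scaleC norm_mult)
    have "cmod (cinner f h) \<le> 2 * (1 + C)^2"
      using cinner_bound[of f h] f(2) hC power_mono[of "1 + norm h" "1 + C" 2] by simp
    then obtain z where "z \<in> Num D A" "cmod (z - lam) \<le> 16*\<tau>" "\<sigma> * xi_coord lam nu z > 0"
        "eta_coord lam nu z \<le> 5*(1+K) * (xi_coord lam nu z)^2"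
      using near_point_on_side[OF D nu rotated_form_accretive[OF D sup] f(1,2) h _ _ _ tau(1,2) s]
        hC CK f(3) unfolding K_def by fastforce
    then show ?thesis using tau(3) by (meson order_trans)
  qed
  then show ?thesis by (rule that)
qed

lemma boundary_point_bounded_ratio:
  assumes cl: "closed \<Omega>" and sup: "supporting_normal \<Omega> lam nu"
    and z: "z \<in> \<Omega>" "0 < \<sigma> * xi_coord lam nu z" "eta_coord lam nu z \<le> M * (xi_coord lam nu z)^2"
  shows "\<exists>q\<in>frontier \<Omega>. cmod (q - lam) \<le> cmod (z - lam) \<and> 0 < \<sigma> * xi_coord lam nu q \<and>
           eta_coord lam nu q / (xi_coord lam nu q)^2 \<le> M"
proof -
  have nu: "cmod nu = 1" and pos: "\<And>p. p \<in> \<Omega> \<Longrightarrow> 0 \<le> eta_coord lam nu p"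
    using sup unfolding supporting_normal_def coords by auto
  obtain q where q: "q \<in> frontier \<Omega>" "xi_coord lam nu q = xi_coord lam nu z"
      "eta_coord lam nu q \<le> eta_coord lam nu z" "cmod (q - lam) \<le> cmod (z - lam)"
    using frontier_projection[OF cl nu pos z(1)] by blast
  have "0 < (xi_coord lam nu z)^2" using z(2) by auto
  then have "eta_coord lam nu q / (xi_coord lam nu q)^2 \<le> M"
    unfolding q(2) using q(3) z(3) by (simp add: divide_simps)
  then show ?thesis using q z(2) by auto
qed

theorem mainTheorem3:
  fixes D :: "'a::chilbert_space set" and A :: "'a \<Rightarrow> 'a" and lam :: complex
  assumes "csubspace D" and "clinear_on D A"
    and "densely_defined D" and "closed_operator D A"
    and "interior (Num D A) \<noteq> {}" and "Num D A \<noteq> UNIV"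
    and "D \<subseteq> adj_dom D A"
    and "lam \<in> frontier (Num D A)"
    and "unilateral_infinite_curvature (closure (Num D A)) lam"
  shows "lam \<in> op_spectrum D A"
proof (rule ccontr)
  assume "lam \<notin> op_spectrum D A"
  then have res: "lam \<in> op_resolvent D A" unfolding op_spectrum_def by blast
  define \<Omega> where "\<Omega> = closure (Num D A)"
  obtain nu where sup: "supporting_normal \<Omega> lam nu"
    and inf: "gamma_l_plus \<Omega> lam nu = \<infinity> \<or> gamma_l_minus \<Omega> lam nu = \<infinity>"
    using assms(9) l_normal_supporting unfolding unilateral_infinite_curvature_def \<Omega>_def by blast
  have "lam \<in> \<Omega>" using assms(8) unfolding \<Omega>_def frontier_def by blast
  then obtain M where near: "\<And>\<epsilon> \<sigma>. \<epsilon> > 0 \<Longrightarrow> \<sigma> = 1 \<or> \<sigma> = -1 \<Longrightarrow> \<exists>z\<in>Num D A.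
      cmod (z - lam) \<le> \<epsilon> \<and> \<sigma> * xi_coord lam nu z > 0 \<and> eta_coord lam nu z \<le> M * (xi_coord lam nu z)^2"
    using resolvent_near_points[OF assms(1,2) res] sup unfolding \<Omega>_def by blast
  have side: "\<exists>q\<in>frontier \<Omega>. cmod (q - lam) \<le> \<epsilon> \<and> 0 < \<sigma> * xi_coord lam nu q \<and>
      eta_coord lam nu q / (xi_coord lam nu q)^2 \<le> M" if e: "\<epsilon> > 0" and s: "\<sigma> = 1 \<or> \<sigma> = -1" for \<epsilon> \<sigma>
  proof -
    obtain z where z: "z \<in> \<Omega>" "cmod (z - lam) \<le> \<epsilon>" "0 < \<sigma> * xi_coord lam nu z"
        "eta_coord lam nu z \<le> M * (xi_coord lam nu z)^2"
      using near[OF e s] closure_subset unfolding \<Omega>_def by blast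
    show ?thesis using boundary_point_bounded_ratio[of \<Omega>, OF _ sup z(1,3,4)] z(2) unfolding \<Omega>_def
      by (meson closed_closure order_trans)
  qed
  have "gamma_l_plus \<Omega> lam nu \<noteq> \<infinity>"
    unfolding gamma_l_plus_def using side[of _ 1] by (intro curvature_limit_finite) auto
  moreover have "gamma_l_minus \<Omega> lam nu \<noteq> \<infinity>"
    unfolding gamma_l_minus_def using side[of _ "-1"] by (intro curvature_limit_finite) auto
  ultimately show False using inf by blast
qed

end
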